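(* Let $p\ge1$ and $\gamma_1,\ldots,\gamma_p \in (0,1)$ be such that $\{1,\gamma_1,\ldots,\gamma_p\}$ is linearly independent over $\mathbb{Q}$. Then every $\vec{x} \in X_{\gamma_1} \times \cdots \times X_{\gamma_p}$, regarded as a sequence in $\Sigma_{2,p}^\omega$, satisfies $P(\vec{x},n)=(n+1)^p$ for every $n \geq 1$.
   Context: $\Sigma_2=\{0,1\}$, $\Sigma_2^\omega$ is the set of infinite binary sequences $x=x_1x_2\cdots$. A subword of $x$ of length $n$ is $x_{k+1}\cdots x_{k+n}$ for some $k\ge0$, and $P(x,n)$ is the number of distinct subwords of length $n$. A sequence is recurrent if every subword occurs infinitely often. For a finite word $u$ over $\{0,1\}$, $|u|_1$ is the number of $1$'s in $u$; $x$ is balanced if $||u|_1-|v|_1|\le 1$ for all subwords $u,v$ of $x$ of the same length. For $\gamma\in[0,1]$, $X_\gamma$ is the set of $x\in\Sigma_2^\omega$ that are recurrent, balanced, and satisfy $\lim_{n\to\infty}\frac1n\#\{1\le j\le n: x_j=1\}=\gamma$. $\Sigma_{2,p}=\Sigma_2^p$ is the alphabet of $p$-tuples, and a sequence $\vec x=\vec x_1\vec x_2\cdots\in\Sigma_{2,p}^\omega$ with $\vec x_i=(x^{(1)}_i,\ldots,x^{(p)}_i)$ is identified with the $p$-tuple of binary sequences $(x^{(1)},\ldots,x^{(p)})$, where $x^{(j)}=x^{(j)}_1x^{(j)}_2\cdots$; subwords and $P(\vec x,n)$ are taken over the alphabet $\Sigma_{2,p}$. *)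

theory Defs
  imports Complex_Main
begin

text \<open>Infinite sequences over an alphabet 'a are functions nat => 'a, indexed from 0
  (x 0 is the paper's x_1). Binary sequences use bool, with True standing for the letter 1.\<close>

definition subword :: "(nat \<Rightarrow> 'a) \<Rightarrow> nat \<Rightarrow> nat \<Rightarrow> 'a list" where
  "subword x k n = map (\<lambda>i. x (k + i)) [0..<n]"

definition subwords :: "(nat \<Rightarrow> 'a) \<Rightarrow> nat \<Rightarrow> 'a list set" where
  "subwords x n = {subword x k n | k. True}"

definition complexity :: "(nat \<Rightarrow> 'a) \<Rightarrow> nat \<Rightarrow> nat" where
  "complexity x n = card (subwords x n)"

definition recurrent :: "(nat \<Rightarrow> 'a) \<Rightarrow> bool" where
  "recurrent x \<longleftrightarrow> (\<forall>n k. infinite {k'. subword x k' n = subword x k n})"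

definition ones :: "bool list \<Rightarrow> nat" where
  "ones u = length (filter id u)"

definition balanced :: "(nat \<Rightarrow> bool) \<Rightarrow> bool" where
  "balanced x \<longleftrightarrow> (\<forall>n. \<forall>u\<in>subwords x n. \<forall>v\<in>subwords x n.
      \<bar>int (ones u) - int (ones v)\<bar> \<le> 1)"

definition X :: "real \<Rightarrow> (nat \<Rightarrow> bool) set" where
  "X \<gamma> = {x. recurrent x \<and> balanced x \<and>
      (\<lambda>n. real (card {j. 1 \<le> j \<and> j \<le> n \<and> x (j - 1)}) / real n) \<longlonglongrightarrow> \<gamma>}"

definition tuple_seq :: "nat \<Rightarrow> (nat \<Rightarrow> nat \<Rightarrow> bool) \<Rightarrow> nat \<Rightarrow> bool list" where
  "tuple_seq p xs i = map (\<lambda>j. xs j i) [0..<p]"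

end

theory Submission
  imports Defs "HOL-Analysis.Kronecker_Approximation_Theorem"
begin

text \<open>
  A balanced sequence x with irrational frequency \<gamma> is mechanical: the number of ones among its
  first m letters is \<lfloor>m\<gamma> + c\<rfloor> or \<lceil>m\<gamma> + c\<rceil> for a fixed c. Consequently the factor of length n
  at position k depends only on the phase t = frac (k\<gamma> + c), and in fact only on the integer
  \<Sum>i=1..n. \<lfloor>i\<gamma> + t\<rfloor>, a nondecreasing step function of t \<in> [0,1) that takes each of its n + 1 values
  on an open interval, because the n jump points 1 - frac (i\<gamma>) are distinct.
  For the p-tuple the factor at k is determined by the p phases frac (k\<gamma>_j + c_j), and since
  1, \<gamma>_1, \<dots>, \<gamma>_p are linearly independent over \<rat>, Kronecker's theorem makes these phases dense
  in the unit cube. Hence all (n + 1)^p combinations of levels occur, and no others.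
\<close>

definition independent_with_one :: "nat \<Rightarrow> (nat \<Rightarrow> real) \<Rightarrow> bool" where
  "independent_with_one p \<gamma> \<longleftrightarrow>
     (\<forall>c0 c. c0 \<in> \<rat> \<and> (\<forall>j<p. c j \<in> \<rat>) \<and> c0 + (\<Sum>j<p. c j * \<gamma> j) = 0
        \<longrightarrow> c0 = 0 \<and> (\<forall>j<p. c j = 0))"

lemma independent_with_oneD:
  assumes ind: "independent_with_one p \<gamma>" and rat: "\<forall>j\<le>p. c j \<in> \<rat>"
    and sum: "(\<Sum>j\<le>p. c j * (\<gamma>(p := 1)) j) = 0" and "j \<le> p"
  shows "c j = 0"
proof -
  have "(\<Sum>j\<le>p. c j * (\<gamma>(p := 1)) j) = (\<Sum>j<p. c j * (\<gamma>(p := 1)) j) + c p"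
    using sum.lessThan_Suc[of "\<lambda>j. c j * (\<gamma>(p := 1)) j" p] by (simp only: lessThan_Suc_atMost) simp
  also have "(\<Sum>j<p. c j * (\<gamma>(p := 1)) j) = (\<Sum>j<p. c j * \<gamma> j)"
    by (rule sum.cong) auto
  finally have split: "(\<Sum>j\<le>p. c j * (\<gamma>(p := 1)) j) = c p + (\<Sum>j<p. c j * \<gamma> j)"
    by linarith
  have "c p = 0 \<and> (\<forall>j<p. c j = 0)"
  proof (rule ind[unfolded independent_with_one_def, rule_format], intro conjI)
    show "c p \<in> \<rat>" "\<forall>j<p. c j \<in> \<rat>"
      using rat by simp_all
    show "c p + (\<Sum>j<p. c j * \<gamma> j) = 0"
      using split sum by simp
  qed
  then show ?thesis
    using \<open>j \<le> p\<close> by (cases "j = p") auto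
qed

lemma independent_with_one_irrational:
  assumes ind: "independent_with_one p \<gamma>" and "j < p"
  shows "\<gamma> j \<notin> \<rat>"
proof
  assume "\<gamma> j \<in> \<rat>"
  define c where "c = (\<lambda>i. if i = j then 1 else (0::real))"
  have "(\<Sum>i<p. c i * \<gamma> i) = (\<Sum>i<p. if i = j then \<gamma> j else 0)"
    by (rule sum.cong) (simp_all add: c_def)
  also have "\<dots> = \<gamma> j"
    using \<open>j < p\<close> by simp
  finally have "(\<Sum>i<p. c i * \<gamma> i) = \<gamma> j" .
  then have "- \<gamma> j = 0 \<and> (\<forall>i<p. c i = 0)"
    using \<open>\<gamma> j \<in> \<rat>\<close>
    by (intro ind[unfolded independent_with_one_def, rule_format]) (simp add: c_def)
  then have "c j = 0"
    using \<open>j < p\<close> by blast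
  then show False
    by (simp add: c_def)
qed

lemma independent_with_one_scale:
  assumes ind: "independent_with_one p \<gamma>" and s: "\<forall>j<p. s j \<noteq> 0"
  shows "independent_with_one p (\<lambda>j. of_int (s j) * \<gamma> j)"
  unfolding independent_with_one_def
proof (intro allI impI)
  fix c0 c
  assume "c0 \<in> \<rat> \<and> (\<forall>j<p. c j \<in> \<rat>) \<and> c0 + (\<Sum>j<p. c j * (of_int (s j) * \<gamma> j)) = 0"
  then have "c0 = 0 \<and> (\<forall>j<p. c j * of_int (s j) = 0)"
    by (intro ind[unfolded independent_with_one_def, rule_format]) (simp add: mult.assoc)
  then show "c0 = 0 \<and> (\<forall>j<p. c j = 0)"
    using s by simp
qed

lemma independent_with_one_inj:
  assumes ind: "independent_with_one p \<gamma>"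
  shows "inj_on (\<gamma>(p := 1)) {..p}"
proof (rule inj_onI, rule ccontr)
  fix i j assume ij: "i \<in> {..p}" "j \<in> {..p}" "(\<gamma>(p := 1)) i = (\<gamma>(p := 1)) j" "i \<noteq> j"
  define c where "c = (\<lambda>k. if k = i then 1 else if k = j then -1 else (0::real))"
  have "(\<Sum>k\<le>p. c k * (\<gamma>(p := 1)) k) = (\<Sum>k\<in>{i, j}. c k * (\<gamma>(p := 1)) k)"
    by (rule sum.mono_neutral_right) (use ij in \<open>auto simp: c_def\<close>)
  also have "\<dots> = 0"
    using ij by (simp add: c_def)
  finally have "(\<Sum>k\<le>p. c k * (\<gamma>(p := 1)) k) = 0" .
  moreover have "\<forall>k\<le>p. c k \<in> \<rat>"
    by (simp add: c_def)
  ultimately have "c i = 0"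
    using independent_with_oneD[OF ind] ij by blast
  then show False
    by (simp add: c_def)
qed

lemma independent_with_one_module_independent:
  assumes ind: "independent_with_one p \<gamma>"
  shows "module.independent (\<lambda>r x. of_int r * x) ((\<gamma>(p := 1)) ` {..p})"
proof -
  interpret Modules.module "\<lambda>r. (*) (real_of_int r)"
    by (simp add: Modules.module.intro distrib_left mult.commute)
  define \<theta> where "\<theta> = \<gamma>(p := 1)"
  show ?thesis
    unfolding independent_explicit_module \<theta>_def[symmetric]
  proof (intro allI impI)
    fix t u v
    assume t: "finite t" "t \<subseteq> \<theta> ` {..p}" and sum: "(\<Sum>v\<in>t. real_of_int (u v) * v) = 0"
      and "v \<in> t"
    define J where "J = {j\<in>{..p}. \<theta> j \<in> t}"
    have t_eq: "t = \<theta> ` J"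
      using t by (auto simp: J_def)
    have inj_J: "inj_on \<theta> J"
      using independent_with_one_inj[OF ind] unfolding \<theta>_def[symmetric]
      by (rule inj_on_subset) (auto simp: J_def)
    define c where "c = (\<lambda>j. if j \<in> J then real_of_int (u (\<theta> j)) else 0)"
    have "(\<Sum>j\<le>p. c j * \<theta> j) = (\<Sum>j\<in>J. real_of_int (u (\<theta> j)) * \<theta> j)"
      by (rule sum.mono_neutral_cong_right) (auto simp: J_def c_def)
    also have "\<dots> = 0"
      using sum by (simp add: t_eq sum.reindex[OF inj_J])
    finally have sum_c: "(\<Sum>j\<le>p. c j * (\<gamma>(p := 1)) j) = 0"
      by (simp only: \<theta>_def)
    have rat: "\<forall>j\<le>p. c j \<in> \<rat>"
      by (simp add: c_def)
    obtain j where j: "j \<in> J" "v = \<theta> j"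
      using \<open>v \<in> t\<close> t_eq by auto
    then have "c j = 0"
      using independent_with_oneD[OF ind rat sum_c] by (simp add: J_def)
    then show "u v = 0"
      using j by (simp add: c_def)
  qed
qed

lemma Kronecker_nat:
  assumes ind: "independent_with_one p \<gamma>" and "\<epsilon> > 0"
  obtains k :: nat and m :: "nat \<Rightarrow> int"
  where "\<And>i. i < p \<Longrightarrow> \<bar>real k * \<gamma> i - of_int (m i) - \<alpha> i\<bar> < \<epsilon>"
proof -
  obtain k1 m1 where k1: "\<And>i. i < p \<Longrightarrow> \<bar>of_int k1 * \<gamma> i - of_int (m1 i) - \<alpha> i\<bar> < \<epsilon>/2"
    using Kronecker_thm_2[OF independent_with_one_module_independent[OF ind] independent_with_one_inj[OF ind], of "\<epsilon>/2" \<alpha>] \<open>\<epsilon> > 0\<close>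
    by auto
  define \<delta> where "\<delta> = \<epsilon> / (2 * (\<bar>of_int k1\<bar> + 1))"
  obtain N :: nat where N: "N > 0" "inverse (real N) < \<delta>"
    using ex_inverse_of_nat_less[of \<delta>] \<open>\<epsilon> > 0\<close> by (auto simp: \<delta>_def)
  \<comment> \<open>Kronecker's theorem gives an integer time k1; adding |k1| copies of a positive Dirichlet
    return time q makes it nonnegative while moving every phase by at most |k1| / N.\<close>
  obtain q P where q: "0 < q" and P: "\<And>i. i < p \<Longrightarrow> \<bar>of_int q * \<gamma> i - of_int (P i)\<bar> < 1 / N"
    using Dirichlet_approx_simult[OF N(1), where \<theta>=\<gamma> and n=p] by blast
  define k where "k = k1 + \<bar>k1\<bar> * q"
  have "k \<ge> 0"
  proof -
    have "\<bar>k1\<bar> * 1 \<le> \<bar>k1\<bar> * q"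
      using q by (intro mult_left_mono) auto
    then show ?thesis
      by (simp add: k_def)
  qed
  have "\<bar>real (nat k) * \<gamma> i - of_int (m1 i + \<bar>k1\<bar> * P i) - \<alpha> i\<bar> < \<epsilon>" if "i < p" for i
  proof -
    have nat_k: "real (nat k) = of_int k1 + \<bar>of_int k1\<bar> * of_int q"
      using \<open>k \<ge> 0\<close> by (simp add: k_def)
    have eq: "real (nat k) * \<gamma> i - of_int (m1 i + \<bar>k1\<bar> * P i) - \<alpha> i
        = (of_int k1 * \<gamma> i - of_int (m1 i) - \<alpha> i) + \<bar>of_int k1\<bar> * (of_int q * \<gamma> i - of_int (P i))"
      unfolding nat_k by (simp add: algebra_simps)
    have "\<bar>of_int q * \<gamma> i - of_int (P i)\<bar> \<le> \<delta>"
      using P[OF that] N(2) by (simp add: inverse_eq_divide)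
    then have "\<bar>\<bar>of_int k1\<bar> * (of_int q * \<gamma> i - of_int (P i))\<bar> \<le> \<bar>of_int k1\<bar> * \<delta>"
      unfolding abs_mult abs_abs by (rule mult_left_mono) simp
    moreover have "\<bar>of_int k1\<bar> * \<delta> \<le> \<epsilon> / 2"
    proof -
      have "\<bar>of_int k1\<bar> * \<delta> = \<epsilon> / 2 * (\<bar>of_int k1\<bar> / (\<bar>of_int k1\<bar> + 1))"
        by (simp add: \<delta>_def)
      also have "\<dots> \<le> \<epsilon> / 2 * 1"
        using \<open>\<epsilon> > 0\<close> by (intro mult_left_mono) auto
      finally show ?thesis
        by simp
    qed
    ultimately show ?thesis
      unfolding eq using k1[OF that] abs_triangle_ineq[of "of_int k1 * \<gamma> i - of_int (m1 i) - \<alpha> i"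
          "\<bar>of_int k1\<bar> * (of_int q * \<gamma> i - of_int (P i))"]
      by linarith
  qed
  then show ?thesis
    by (rule that)
qed

lemma Kronecker_frac_in_intervals:
  assumes ind: "independent_with_one p \<beta>"
    and ab: "\<And>j. j < p \<Longrightarrow> 0 \<le> a j \<and> a j < b j \<and> b j \<le> 1"
  obtains k :: nat where "\<And>j. j < p \<Longrightarrow> frac (real k * \<beta> j + c j) \<in> {a j<..<b j}"
proof -
  define \<epsilon> where "\<epsilon> = Min (insert 1 ((\<lambda>j. (b j - a j) / 2) ` {..<p}))"
  have "\<epsilon> > 0"
    unfolding \<epsilon>_def using ab by (subst Min_gr_iff) auto
  have \<epsilon>_le: "\<epsilon> \<le> (b j - a j) / 2" if "j < p" for j
    unfolding \<epsilon>_def using that by (intro Min_le) auto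
  obtain k m where km: "\<And>j. j < p \<Longrightarrow> \<bar>real k * \<beta> j - of_int (m j) - ((a j + b j) / 2 - c j)\<bar> < \<epsilon>"
    using Kronecker_nat[OF ind \<open>\<epsilon> > 0\<close>, where \<alpha> = "\<lambda>j. (a j + b j) / 2 - c j"] by blast
  have "frac (real k * \<beta> j + c j) \<in> {a j<..<b j}" if "j < p" for j
  proof -
    define y where "y = real k * \<beta> j + c j - of_int (m j)"
    have "y - (a j + b j) / 2 = real k * \<beta> j - of_int (m j) - ((a j + b j) / 2 - c j)"
      by (simp add: y_def)
    then have "\<bar>y - (a j + b j) / 2\<bar> < (b j - a j) / 2"
      using km[OF that] \<epsilon>_le[OF that] by linarith
    then have "a j < y \<and> y < b j"
      by (auto simp: abs_less_iff field_simps)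
    moreover have "frac (real k * \<beta> j + c j) = y"
      unfolding frac_unique_iff using calculation ab[OF that] by (simp add: y_def)
    ultimately show ?thesis
      by simp
  qed
  then show ?thesis
    by (rule that)
qed

definition prefix_ones :: "(nat \<Rightarrow> bool) \<Rightarrow> nat \<Rightarrow> int" where
  "prefix_ones x m = int (card {i. i < m \<and> x i})"

lemma prefix_ones_0 [simp]: "prefix_ones x 0 = 0"
  by (simp add: prefix_ones_def)

lemma prefix_ones_Suc: "prefix_ones x (Suc m) = prefix_ones x m + (if x m then 1 else 0)"
proof -
  have "{i. i < Suc m \<and> x i} = {i. i < m \<and> x i} \<union> (if x m then {m} else {})"
    by (auto simp: less_Suc_eq)
  then show ?thesis
    by (auto simp: prefix_ones_def)
qed

lemma ones_subword: "int (ones (subword x k n)) = prefix_ones x (k + n) - prefix_ones x k"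
  by (induction n) (simp_all add: ones_def subword_def prefix_ones_Suc)

lemma subword_eq_iff: "subword x k n = subword x k' n \<longleftrightarrow> (\<forall>i<n. x (k + i) = x (k' + i))"
  by (auto simp: subword_def map_eq_conv)

lemma subword_eq_iff_prefix_ones:
  "subword x k n = subword x k' n \<longleftrightarrow>
     (\<forall>i\<le>n. prefix_ones x (k + i) - prefix_ones x k = prefix_ones x (k' + i) - prefix_ones x k')"
proof
  assume "subword x k n = subword x k' n"
  then have same: "\<forall>i<n. x (k + i) = x (k' + i)"
    by (simp add: subword_eq_iff)
  show "\<forall>i\<le>n. prefix_ones x (k + i) - prefix_ones x k = prefix_ones x (k' + i) - prefix_ones x k'"
  proof (intro allI impI)
    fix i assume "i \<le> n"
    then show "prefix_ones x (k + i) - prefix_ones x k = prefix_ones x (k' + i) - prefix_ones x k'"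
      by (induction i) (use same in \<open>auto simp: prefix_ones_Suc\<close>)
  qed
next
  assume same: "\<forall>i\<le>n. prefix_ones x (k + i) - prefix_ones x k = prefix_ones x (k' + i) - prefix_ones x k'"
  have "x (k + i) = x (k' + i)" if "i < n" for i
    using same[rule_format, of i] same[rule_format, of "Suc i"] that
    by (auto simp: prefix_ones_Suc split: if_splits)
  then show "subword x k n = subword x k' n"
    by (simp add: subword_eq_iff)
qed

lemma card_ones_upto:
  fixes x :: "nat \<Rightarrow> bool"
  shows "card {j. 1 \<le> j \<and> j \<le> n \<and> x (j - 1)} = card {i. i < n \<and> x i}"
proof -
  have "{j. 1 \<le> j \<and> j \<le> n \<and> x (j - 1)} = Suc ` {i. i < n \<and> x i}"
  proof (rule set_eqI, rule iffI)
    fix j assume "j \<in> {j. 1 \<le> j \<and> j \<le> n \<and> x (j - 1)}"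
    then show "j \<in> Suc ` {i. i < n \<and> x i}"
      by (intro image_eqI[of _ _ "j - 1"]) auto
  qed auto
  then show ?thesis
    by (simp add: card_image)
qed

lemma balanced_prefix_ones:
  assumes "balanced x"
  shows "\<bar>(prefix_ones x (m + k) - prefix_ones x m) - (prefix_ones x (m' + k) - prefix_ones x m')\<bar> \<le> 1"
proof -
  have "subword x m k \<in> subwords x k" "subword x m' k \<in> subwords x k"
    by (auto simp: subwords_def)
  then show ?thesis
    using assms by (auto simp: balanced_def simp flip: ones_subword)
qed

lemma prefix_ones_mult:
  "prefix_ones x (j * k) = (\<Sum>i<j. prefix_ones x (i * k + k) - prefix_ones x (i * k))"
  by (induction j) (auto simp: algebra_simps)

lemma balanced_window_bound:
  assumes bal: "balanced x"
    and lim: "(\<lambda>n. real_of_int (prefix_ones x n) / real n) \<longlonglongrightarrow> \<gamma>"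
    and irr: "\<gamma> \<notin> \<rat>"
  shows "\<bar>real_of_int (prefix_ones x (m + k) - prefix_ones x m) - real k * \<gamma>\<bar> < 1"
proof (cases "k = 0")
  case False
  define w where "w = prefix_ones x (m + k) - prefix_ones x m"
  have lim_blocks: "(\<lambda>j. real_of_int (prefix_ones x (j * k)) / real (j * k)) \<longlonglongrightarrow> \<gamma>"
    using LIMSEQ_subseq_LIMSEQ[OF lim, of "\<lambda>j. j * k"] False
    by (simp add: strict_mono_def o_def)
  have rescale: "real k * (a / real (j * k)) = a / real j" for a and j
    using False by (cases "j = 0") (simp_all add: field_simps)
  have lim_k: "(\<lambda>j. real_of_int (prefix_ones x (j * k)) / real j) \<longlonglongrightarrow> real k * \<gamma>"
    using tendsto_mult_left[OF lim_blocks, of "real k"] unfolding rescale .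
  \<comment> \<open>Every block of length k carries w - 1, w or w + 1 ones.\<close>
  have blocks: "\<bar>prefix_ones x (j * k) - int j * w\<bar> \<le> int j" for j
  proof -
    have "\<bar>prefix_ones x (j * k) - int j * w\<bar> = \<bar>\<Sum>i<j. prefix_ones x (i * k + k) - prefix_ones x (i * k) - w\<bar>"
      by (subst prefix_ones_mult) (simp add: sum_subtractf)
    also have "\<dots> \<le> (\<Sum>i<j. \<bar>prefix_ones x (i * k + k) - prefix_ones x (i * k) - w\<bar>)"
      by (rule sum_abs)
    also have "\<dots> \<le> (\<Sum>i<j. 1)"
      using balanced_prefix_ones[OF bal, of "_ * k" k m] by (intro sum_mono) (simp add: w_def)
    finally show ?thesis
      by simp
  qed
  have "\<bar>real_of_int (prefix_ones x (j * k)) / real j - real_of_int w\<bar> \<le> 1" if "j \<ge> 1" for j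
  proof -
    have "\<bar>real_of_int (prefix_ones x (j * k)) - real j * real_of_int w\<bar> \<le> real j"
      using blocks[of j] by (metis of_int_abs of_int_diff of_int_le_iff of_int_mult of_int_of_nat_eq)
    moreover have "real_of_int (prefix_ones x (j * k)) / real j - real_of_int w
        = (real_of_int (prefix_ones x (j * k)) - real j * real_of_int w) / real j"
      using that by (simp add: field_simps)
    ultimately show ?thesis
      using that by (simp add: abs_divide divide_le_eq)
  qed
  then have "\<bar>real k * \<gamma> - real_of_int w\<bar> \<le> 1"
    by (intro tendsto_upperbound[OF tendsto_rabs[OF tendsto_diff[OF lim_k tendsto_const]]])
       (auto simp: eventually_sequentially)
  moreover have "real k * \<gamma> \<notin> \<rat>"
    using irr False by (simp add: Rats_mult_iff)
  then have "real k * \<gamma> \<noteq> real_of_int (w + 1)" "real k * \<gamma> \<noteq> real_of_int (w - 1)"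
    by (metis Rats_of_int)+
  ultimately show ?thesis
    by (auto simp: w_def abs_le_iff abs_less_iff)
qed simp

text \<open>For s = -1 the right-hand side is the ceiling \<lceil>m\<gamma> - c\<rceil>, so this covers upper and lower
  mechanical sequences at once.\<close>

lemma mechanical_if_close_to_line:
  fixes a :: "nat \<Rightarrow> int" and \<gamma> :: real
  assumes close: "\<And>m m'. \<bar>(a m - real m * \<gamma>) - (a m' - real m' * \<gamma>)\<bar> < 1"
  shows "\<exists>s c. (s = 1 \<or> s = -1) \<and> (\<forall>m. a m = s * \<lfloor>real m * (of_int s * \<gamma>) + c\<rfloor>)"
proof -
  define d where "d m = real_of_int (a m) - real m * \<gamma>" for m
  have bdd: "bdd_below (range d)"
  proof (rule bdd_belowI[of _ "d 0 - 1"])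
    fix y assume "y \<in> range d"
    then obtain m where "y = d m"
      by auto
    then show "d 0 - 1 \<le> y"
      using close[of 0 m] by (simp add: d_def abs_less_iff)
  qed
  define c0 where "c0 = Inf (range d)"
  have lower: "c0 \<le> d m" for m
    unfolding c0_def using bdd by (simp add: cINF_lower)
  have upper: "d m \<le> c0 + 1" for m
  proof -
    have "d m - 1 \<le> c0"
      unfolding c0_def
    proof (rule cINF_greatest)
      fix m'
      show "d m - 1 \<le> d m'"
        using close[of m m'] by (simp add: d_def abs_less_iff)
    qed simp
    then show ?thesis
      by simp
  qed
  \<comment> \<open>All values d m lie in [c0, c0 + 1]; as they differ by less than 1, at most one end is
    attained, and which one decides between ceiling (s = -1) and floor (s = 1).\<close>
  show ?thesis
  proof (cases "\<exists>m0. d m0 = c0")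
    case True
    then obtain m0 where "d m0 = c0"
      by blast
    have "a m = - \<lfloor>real m * (- \<gamma>) - c0\<rfloor>" for m
    proof -
      have "d m < c0 + 1"
        using close[of m m0] \<open>d m0 = c0\<close> by (simp add: d_def)
      then have "\<lceil>real m * \<gamma> + c0\<rceil> = a m"
        using lower[of m] unfolding ceiling_eq_iff d_def by linarith
      then show ?thesis
        by (simp add: ceiling_def)
    qed
    then show ?thesis
      by (intro exI[of _ "-1"] exI[of _ "- c0"]) simp
  next
    case False
    have "a m = \<lfloor>real m * \<gamma> + (c0 + 1)\<rfloor>" for m
    proof -
      have "c0 < d m"
        using lower[of m] False by (metis order_le_less)
      then show ?thesis
        using upper[of m] unfolding floor_eq_iff d_def by linarith
    qed
    then show ?thesis
      by (intro exI[of _ 1] exI[of _ "c0 + 1"]) simp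
  qed
qed

lemma balanced_mechanical:
  assumes "x \<in> X \<gamma>" and irr: "\<gamma> \<notin> \<rat>"
  shows "\<exists>s c. (s = 1 \<or> s = -1) \<and> (\<forall>m. prefix_ones x m = s * \<lfloor>real m * (of_int s * \<gamma>) + c\<rfloor>)"
proof (rule mechanical_if_close_to_line)
  have bal: "balanced x"
    using assms by (simp add: X_def)
  have lim: "(\<lambda>n. real_of_int (prefix_ones x n) / real n) \<longlonglongrightarrow> \<gamma>"
    using assms unfolding X_def card_ones_upto prefix_ones_def by simp
  fix m m'
  show "\<bar>(prefix_ones x m - real m * \<gamma>) - (prefix_ones x m' - real m' * \<gamma>)\<bar> < 1"
  proof (cases m m' rule: le_cases)
    case le
    then obtain k where "m' = m + k"
      using le_Suc_ex by blast
    then show ?thesis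
      using balanced_window_bound[OF bal lim irr, of m k] by (simp add: algebra_simps abs_minus_commute)
  next
    case ge
    then obtain k where "m = m' + k"
      using le_Suc_ex by blast
    then show ?thesis
      using balanced_window_bound[OF bal lim irr, of m' k] by (simp add: algebra_simps)
  qed
qed

definition floor_sum :: "real \<Rightarrow> nat \<Rightarrow> real \<Rightarrow> int" where
  "floor_sum \<beta> n t = (\<Sum>i=1..n. \<lfloor>real i * \<beta> + t\<rfloor>)"

lemma floor_sum_eq_card:
  assumes "0 \<le> t" "t < 1"
  shows "floor_sum \<beta> n t = floor_sum \<beta> n 0 + int (card {i\<in>{1..n}. 1 - frac (real i * \<beta>) \<le> t})"
proof -
  have "\<lfloor>y + t\<rfloor> = \<lfloor>y\<rfloor> + (if 1 - frac y \<le> t then 1 else 0)" for y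
    using assms by (simp add: floor_add frac_eq floor_eq_iff)
  then have "floor_sum \<beta> n t = floor_sum \<beta> n 0 + (\<Sum>i\<in>{1..n}. if 1 - frac (real i * \<beta>) \<le> t then 1 else 0)"
    by (simp add: floor_sum_def sum.distrib)
  then show ?thesis
    by (simp add: sum.If_cases Int_def conj_commute)
qed

lemma floor_sum_bounds:
  assumes "0 \<le> t" "t < 1"
  shows "floor_sum \<beta> n t \<in> {floor_sum \<beta> n 0 .. floor_sum \<beta> n 0 + int n}"
proof -
  have "card {i\<in>{1..n}. 1 - frac (real i * \<beta>) \<le> t} \<le> card {1..n}"
    by (rule card_mono) auto
  then show ?thesis
    using floor_sum_eq_card[OF assms, of \<beta> n] by simp
qed

lemma floor_sum_eq_iff:
  assumes "0 \<le> t" "t < 1" "0 \<le> t'" "t' < 1"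
  shows "floor_sum \<beta> n t = floor_sum \<beta> n t' \<longleftrightarrow> (\<forall>i\<le>n. \<lfloor>real i * \<beta> + t\<rfloor> = \<lfloor>real i * \<beta> + t'\<rfloor>)"
proof -
  \<comment> \<open>All summands are monotone in the phase, so equal sums force equal summands.\<close>
  have mono: "\<forall>i\<in>{1..n}. \<lfloor>real i * \<beta> + u\<rfloor> = \<lfloor>real i * \<beta> + u'\<rfloor>"
    if "u \<le> u'" "floor_sum \<beta> n u = floor_sum \<beta> n u'" for u u'
  proof (rule ccontr)
    assume "\<not> ?thesis"
    then obtain i where i: "i \<in> {1..n}" "\<lfloor>real i * \<beta> + u\<rfloor> \<noteq> \<lfloor>real i * \<beta> + u'\<rfloor>"
      by blast
    have le: "\<forall>i\<in>{1..n}. \<lfloor>real i * \<beta> + u\<rfloor> \<le> \<lfloor>real i * \<beta> + u'\<rfloor>"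
      using \<open>u \<le> u'\<close> by (auto intro: floor_mono)
    then have "\<lfloor>real i * \<beta> + u\<rfloor> < \<lfloor>real i * \<beta> + u'\<rfloor>"
      using i by force
    then have "floor_sum \<beta> n u < floor_sum \<beta> n u'"
      unfolding floor_sum_def using le i(1) by (intro sum_strict_mono_ex1) auto
    then show False
      using that by simp
  qed
  have "\<lfloor>t\<rfloor> = 0" "\<lfloor>t'\<rfloor> = 0"
    using assms by (simp_all add: floor_eq_iff)
  moreover have "(\<forall>i\<le>n. Q i) \<longleftrightarrow> Q 0 \<and> (\<forall>i\<in>{1..n}. Q i)" for Q :: "nat \<Rightarrow> bool"
    using not_gr0 by (auto simp: Suc_le_eq)
  moreover have "floor_sum \<beta> n t = floor_sum \<beta> n t' \<longleftrightarrow> (\<forall>i\<in>{1..n}. \<lfloor>real i * \<beta> + t\<rfloor> = \<lfloor>real i * \<beta> + t'\<rfloor>)"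
  proof
    assume eq: "floor_sum \<beta> n t = floor_sum \<beta> n t'"
    show "\<forall>i\<in>{1..n}. \<lfloor>real i * \<beta> + t\<rfloor> = \<lfloor>real i * \<beta> + t'\<rfloor>"
    proof (cases "t \<le> t'")
      case True
      then show ?thesis
        using mono eq by blast
    next
      case False
      then show ?thesis
        using mono[of t' t] eq by simp
    qed
  qed (simp add: floor_sum_def)
  ultimately show ?thesis
    by simp
qed

lemma counting_function_levels:
  fixes R :: "real set"
  assumes "finite R" "R \<subseteq> {0<..<1}" "l \<le> card R"
  obtains a b where "0 \<le> a" "a < b" "b \<le> 1" "\<And>t. t \<in> {a<..<b} \<Longrightarrow> card {v\<in>R. v \<le> t} = l"
proof -
  define xs where "xs = sorted_list_of_set R"
  have sorted: "sorted_wrt (<) xs" and set_xs: "set xs = R" and len: "length xs = card R"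
    using assms(1) by (simp_all add: xs_def sorted_list_of_set.strict_sorted_key_list_of_set)
  have xs_01: "0 < xs ! i \<and> xs ! i < 1" if "i < length xs" for i
    using assms(2) nth_mem[OF that] set_xs by auto
  have nth_le: "xs ! i \<le> xs ! j" if "i \<le> j" "j < length xs" for i j
    using sorted_wrt_nth_less[OF sorted, of i j] that by (cases "i = j") auto
  \<comment> \<open>Between the l-th and the (l+1)-st smallest point the count is l.\<close>
  define a where "a = (if l = 0 then 0 else xs ! (l - 1))"
  define b where "b = (if l = length xs then 1 else xs ! l)"
  have "0 \<le> a" "b \<le> 1"
    using xs_01 assms(3) by (auto simp: a_def b_def len less_imp_le)
  moreover have "a < b"
    using xs_01 assms(3) sorted_wrt_nth_less[OF sorted, of "l - 1" l]
    by (auto simp: a_def b_def len)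
  moreover have "card {v\<in>R. v \<le> t} = l" if "t \<in> {a<..<b}" for t
  proof -
    have "{v\<in>R. v \<le> t} = set (take l xs)"
    proof (rule set_eqI)
      fix v
      show "v \<in> {v\<in>R. v \<le> t} \<longleftrightarrow> v \<in> set (take l xs)"
      proof
        assume "v \<in> {v\<in>R. v \<le> t}"
        then obtain i where i: "i < length xs" "v = xs ! i" "v \<le> t"
          by (auto simp: set_xs[symmetric] in_set_conv_nth)
        have "i < l"
          using i that nth_le[of l i] by (cases "i < l") (auto simp: b_def)
        then show "v \<in> set (take l xs)"
          using i by (auto simp: in_set_conv_nth)
      next
        assume "v \<in> set (take l xs)"
        then obtain i where i: "i < l" "i < length xs" "v = xs ! i"
          by (auto simp: in_set_conv_nth)
        then have "xs ! i \<le> xs ! (l - 1)"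
          using nth_le[of i "l - 1"] assms(3) len by simp
        then have "v \<le> t"
          using that i by (auto simp: a_def)
        then show "v \<in> {v\<in>R. v \<le> t}"
          using i set_xs by auto
      qed
    qed
    then show ?thesis
      using sorted assms(3) len by (simp add: distinct_card strict_sorted_iff)
  qed
  ultimately show ?thesis
    using that by blast
qed

lemma floor_sum_levels:
  assumes irr: "\<beta> \<notin> \<rat>" and "l \<le> n"
  shows "\<exists>a b. 0 \<le> a \<and> a < b \<and> b \<le> 1 \<and> (\<forall>t\<in>{a<..<b}. floor_sum \<beta> n t = floor_sum \<beta> n 0 + int l)"
proof -
  define r where "r i = 1 - frac (real i * \<beta>)" for i :: nat
  have frac_ne: "frac (real i * \<beta>) \<noteq> frac (real j * \<beta>)" if "i \<noteq> j" for i j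
  proof
    assume "frac (real i * \<beta>) = frac (real j * \<beta>)"
    then have "(real i - real j) * \<beta> = of_int (\<lfloor>real i * \<beta>\<rfloor> - \<lfloor>real j * \<beta>\<rfloor>)"
      by (simp add: frac_def algebra_simps)
    then have "(real i - real j) * \<beta> \<in> \<rat>"
      by simp
    then show False
      using irr that by (simp add: Rats_mult_iff)
  qed
  have "inj_on r {1..n}"
    using frac_ne by (auto simp: inj_on_def r_def)
  then have card_R: "card (r ` {1..n}) = n"
    by (simp add: card_image)
  have R01: "r ` {1..n} \<subseteq> {0<..<1}"
    using frac_ne[of _ 0] frac_lt_1 frac_ge_0 by (fastforce simp: r_def order_le_less)
  have "l \<le> card (r ` {1..n})"
    using card_R \<open>l \<le> n\<close> by simp
  then obtain a b where ab: "0 \<le> a" "a < b" "b \<le> 1"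
      and count: "\<And>t. t \<in> {a<..<b} \<Longrightarrow> card {v \<in> r ` {1..n}. v \<le> t} = l"
    using counting_function_levels[OF finite_imageI[OF finite_atLeastAtMost] R01] by blast
  have "\<forall>t\<in>{a<..<b}. floor_sum \<beta> n t = floor_sum \<beta> n 0 + int l"
  proof
    fix t assume "t \<in> {a<..<b}"
    have "card {i\<in>{1..n}. r i \<le> t} = card (r ` {i\<in>{1..n}. r i \<le> t})"
      using \<open>inj_on r {1..n}\<close> by (intro card_image[symmetric]) (auto intro: inj_on_subset)
    also have "r ` {i\<in>{1..n}. r i \<le> t} = {v \<in> r ` {1..n}. v \<le> t}"
      by auto
    finally show "floor_sum \<beta> n t = floor_sum \<beta> n 0 + int l"
      using floor_sum_eq_card[of t \<beta> n] count[OF \<open>t \<in> {a<..<b}\<close>] \<open>t \<in> {a<..<b}\<close> ab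
      by (simp add: r_def)
  qed
  with ab show ?thesis
    by blast
qed

lemma prefix_ones_diff_mechanical:
  assumes "\<And>m. prefix_ones x m = s * \<lfloor>real m * \<beta> + c\<rfloor>"
  shows "prefix_ones x (k + i) - prefix_ones x k = s * \<lfloor>real i * \<beta> + frac (real k * \<beta> + c)\<rfloor>"
proof -
  have "real (k + i) * \<beta> + c = (real i * \<beta> + frac (real k * \<beta> + c)) + of_int \<lfloor>real k * \<beta> + c\<rfloor>"
    by (simp add: frac_def algebra_simps)
  then have "\<lfloor>real (k + i) * \<beta> + c\<rfloor> = \<lfloor>real i * \<beta> + frac (real k * \<beta> + c)\<rfloor> + \<lfloor>real k * \<beta> + c\<rfloor>"
    by (simp only: floor_add_int)
  then show ?thesis
    using assms by (simp add: algebra_simps)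
qed

lemma subword_eq_iff_floor_sum:
  assumes mech: "\<And>m. prefix_ones x m = s * \<lfloor>real m * \<beta> + c\<rfloor>" and "s \<noteq> 0"
  shows "subword x k n = subword x k' n \<longleftrightarrow>
     floor_sum \<beta> n (frac (real k * \<beta> + c)) = floor_sum \<beta> n (frac (real k' * \<beta> + c))"
proof -
  have "subword x k n = subword x k' n \<longleftrightarrow>
      (\<forall>i\<le>n. s * \<lfloor>real i * \<beta> + frac (real k * \<beta> + c)\<rfloor> = s * \<lfloor>real i * \<beta> + frac (real k' * \<beta> + c)\<rfloor>)"
    unfolding subword_eq_iff_prefix_ones prefix_ones_diff_mechanical[OF mech] ..
  also have "\<dots> \<longleftrightarrow> (\<forall>i\<le>n. \<lfloor>real i * \<beta> + frac (real k * \<beta> + c)\<rfloor> = \<lfloor>real i * \<beta> + frac (real k' * \<beta> + c)\<rfloor>)"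
    using \<open>s \<noteq> 0\<close> by simp
  also have "\<dots> \<longleftrightarrow> floor_sum \<beta> n (frac (real k * \<beta> + c)) = floor_sum \<beta> n (frac (real k' * \<beta> + c))"
    by (rule floor_sum_eq_iff[symmetric]) (simp_all add: frac_lt_1)
  finally show ?thesis .
qed

lemma range_floor_sum_phases:
  assumes ind: "independent_with_one p \<beta>"
  shows "range (\<lambda>k. restrict (\<lambda>j. floor_sum (\<beta> j) n (frac (real k * \<beta> j + c j))) {..<p})
    = PiE {..<p} (\<lambda>j. {floor_sum (\<beta> j) n 0 .. floor_sum (\<beta> j) n 0 + int n})"
    (is "range ?L = ?P")
proof
  show "range ?L \<subseteq> ?P"
  proof
    fix f assume "f \<in> range ?L"
    then obtain k where "f = ?L k"
      by blast
    then show "f \<in> ?P"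
      using floor_sum_bounds[OF frac_ge_0 frac_lt_1] by (simp add: restrict_PiE_iff)
  qed
  show "?P \<subseteq> range ?L"
  proof
    fix f assume f: "f \<in> ?P"
    have "\<forall>j\<in>{..<p}. \<exists>a b. 0 \<le> a \<and> a < b \<and> b \<le> 1 \<and> (\<forall>t\<in>{a<..<b}. floor_sum (\<beta> j) n t = f j)"
    proof
      fix j assume "j \<in> {..<p}"
      define l where "l = nat (f j - floor_sum (\<beta> j) n 0)"
      have "f j \<in> {floor_sum (\<beta> j) n 0 .. floor_sum (\<beta> j) n 0 + int n}"
        using f \<open>j \<in> {..<p}\<close> by (auto simp: PiE_iff)
      then have fj: "f j = floor_sum (\<beta> j) n 0 + int l" and "l \<le> n"
        by (auto simp: l_def nat_le_iff)
      have "j < p"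
        using \<open>j \<in> {..<p}\<close> by simp
      show "\<exists>a b. 0 \<le> a \<and> a < b \<and> b \<le> 1 \<and> (\<forall>t\<in>{a<..<b}. floor_sum (\<beta> j) n t = f j)"
        unfolding fj by (rule floor_sum_levels[OF independent_with_one_irrational[OF ind \<open>j < p\<close>] \<open>l \<le> n\<close>])
    qed
    from bchoice[OF this] obtain a where
      "\<forall>j\<in>{..<p}. \<exists>b. 0 \<le> a j \<and> a j < b \<and> b \<le> 1 \<and> (\<forall>t\<in>{a j<..<b}. floor_sum (\<beta> j) n t = f j)"
      by blast
    from bchoice[OF this] obtain b where
      ab: "\<forall>j\<in>{..<p}. 0 \<le> a j \<and> a j < b j \<and> b j \<le> 1 \<and> (\<forall>t\<in>{a j<..<b j}. floor_sum (\<beta> j) n t = f j)"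
      by blast
    have "0 \<le> a j \<and> a j < b j \<and> b j \<le> 1" if "j < p" for j
      using ab that by simp
    then obtain k :: nat where k: "\<And>j. j < p \<Longrightarrow> frac (real k * \<beta> j + c j) \<in> {a j<..<b j}"
      using Kronecker_frac_in_intervals[OF ind, where c = c] by blast
    have "?L k = f"
    proof
      fix j
      show "?L k j = f j"
      proof (cases "j < p")
        case True
        then show ?thesis
          using k[OF True] ab by simp
      next
        case False
        then show ?thesis
          using PiE_arb[OF f, of j] by simp
      qed
    qed
    then show "f \<in> range ?L"
      by (rule range_eqI[OF sym])
  qed
qed

lemma card_range_eq_if_same_fibres:
  assumes same: "\<And>k k'. f k = f k' \<longleftrightarrow> g k = g k'"
  shows "card (range f) = card (range g)"
proof -
  define G where "G w = g (SOME k. f k = w)" for w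
  have G_f: "G (f k) = g k" for k
  proof -
    have "f (SOME k'. f k' = f k) = f k"
      by (rule someI) simp
    then show ?thesis
      using same by (simp add: G_def)
  qed
  have "bij_betw G (range f) (range g)"
    unfolding bij_betw_def
  proof
    show "inj_on G (range f)"
      by (rule inj_onI) (auto simp: G_f same)
    show "G ` range f = range g"
      by (auto simp: G_f image_iff)
  qed
  then show ?thesis
    by (rule bij_betw_same_card)
qed

lemma subword_tuple_seq_eq_iff:
  "subword (tuple_seq p xs) k n = subword (tuple_seq p xs) k' n \<longleftrightarrow>
    (\<forall>j<p. subword (xs j) k n = subword (xs j) k' n)"
  by (auto simp: subword_eq_iff tuple_seq_def map_eq_conv)

lemma complexity_tuple_seq_mechanical:
  assumes ind: "independent_with_one p \<beta>"
    and mech: "\<And>j m. j < p \<Longrightarrow> prefix_ones (xs j) m = s j * \<lfloor>real m * \<beta> j + c j\<rfloor>"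
    and "\<And>j. j < p \<Longrightarrow> s j \<noteq> 0"
  shows "complexity (tuple_seq p xs) n = (n + 1) ^ p"
proof -
  define L where "L k = restrict (\<lambda>j. floor_sum (\<beta> j) n (frac (real k * \<beta> j + c j))) {..<p}" for k
  have "complexity (tuple_seq p xs) n = card (range (\<lambda>k. subword (tuple_seq p xs) k n))"
    by (simp add: complexity_def subwords_def full_SetCompr_eq)
  also have "\<dots> = card (range L)"
    using subword_eq_iff_floor_sum[OF mech \<open>\<And>j. j < p \<Longrightarrow> s j \<noteq> 0\<close>]
    by (intro card_range_eq_if_same_fibres) (auto simp: subword_tuple_seq_eq_iff L_def restrict_def fun_eq_iff)
  also have "\<dots> = (n + 1) ^ p"
    unfolding L_def range_floor_sum_phases[OF ind] by (simp add: card_PiE nat_add_distrib)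
  finally show ?thesis .
qed

lemma mechanical_family:
  assumes ind: "independent_with_one p \<gamma>" and X: "\<forall>j<p. xs j \<in> X (\<gamma> j)"
  shows "\<exists>(s :: nat \<Rightarrow> int) (c :: nat \<Rightarrow> real). \<forall>j<p. (s j = 1 \<or> s j = -1) \<and>
    (\<forall>m. prefix_ones (xs j) m = s j * \<lfloor>real m * (of_int (s j) * \<gamma> j) + c j\<rfloor>)"
proof -
  have "\<forall>j\<in>{..<p}. \<exists>s c. (s = 1 \<or> s = -1) \<and>
      (\<forall>m. prefix_ones (xs j) m = s * \<lfloor>real m * (of_int s * \<gamma> j) + c\<rfloor>)"
  proof
    fix j assume "j \<in> {..<p}"
    then have "j < p"
      by simp
    then show "\<exists>s c. (s = 1 \<or> s = -1) \<and>
        (\<forall>m. prefix_ones (xs j) m = s * \<lfloor>real m * (of_int s * \<gamma> j) + c\<rfloor>)"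
      using X independent_with_one_irrational[OF ind] by (intro balanced_mechanical) auto
  qed
  from bchoice[OF this] obtain s where "\<forall>j\<in>{..<p}. \<exists>c. (s j = 1 \<or> s j = -1) \<and>
      (\<forall>m. prefix_ones (xs j) m = s j * \<lfloor>real m * (of_int (s j) * \<gamma> j) + c\<rfloor>)"
    by blast
  from bchoice[OF this] obtain c where "\<forall>j\<in>{..<p}. (s j = 1 \<or> s j = -1) \<and>
      (\<forall>m. prefix_ones (xs j) m = s j * \<lfloor>real m * (of_int (s j) * \<gamma> j) + c j\<rfloor>)"
    by blast
  then show ?thesis
    by auto
qed

theorem lemma3:
  fixes p :: nat and \<gamma> :: "nat \<Rightarrow> real" and xs :: "nat \<Rightarrow> nat \<Rightarrow> bool"
  assumes "p \<ge> 1"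
    and "\<forall>j<p. 0 < \<gamma> j \<and> \<gamma> j < 1"
    and "\<forall>c0 c. c0 \<in> \<rat> \<and> (\<forall>j<p. c j \<in> \<rat>) \<and> c0 + (\<Sum>j<p. c j * \<gamma> j) = 0
           \<longrightarrow> c0 = 0 \<and> (\<forall>j<p. c j = 0)"
    and "\<forall>j<p. xs j \<in> X (\<gamma> j)"
  shows "\<forall>n\<ge>1. complexity (tuple_seq p xs) n = (n + 1) ^ p"
proof -
  have ind: "independent_with_one p \<gamma>"
    using assms(3) by (simp add: independent_with_one_def)
  obtain s c where sc: "\<forall>j<p. (s j = 1 \<or> s j = -1) \<and>
      (\<forall>m. prefix_ones (xs j) m = s j * \<lfloor>real m * (of_int (s j) * \<gamma> j) + c j\<rfloor>)"
    using mechanical_family[OF ind assms(4)] by blast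
  then have mech: "\<And>j m. j < p \<Longrightarrow> prefix_ones (xs j) m = s j * \<lfloor>real m * (of_int (s j) * \<gamma> j) + c j\<rfloor>"
    by blast
  have s_nonzero: "s j \<noteq> 0" if "j < p" for j
    using sc that by auto
  have "independent_with_one p (\<lambda>j. of_int (s j) * \<gamma> j)"
    by (rule independent_with_one_scale[OF ind]) (simp add: s_nonzero)
  from complexity_tuple_seq_mechanical[OF this mech s_nonzero] show ?thesis
    by simp
qed

end
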